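(* Let $l:\mathbb{R}^n\times\mathbb{R}^m\times\mathbb{R}^d\to\mathbb{R}$ be $\ell_1$-smooth and $L_1$-Lipschitz continuous, let $\mathcal{Y}\subset\mathbb{R}^m$ be nonempty, closed, convex and bounded, and let $l(x,\cdot,z)$ be $\mu$-strongly concave on $\mathcal{Y}$ for every $(x,z)$. Fix an iteration $k$ with center $\widehat x^k\in\mathbb{R}^n$, radius $\delta_k\in(0,\delta_{\max}]$, an affine model with $\|\widehat B^{k,1}\|_F\le B$, and define $\mathcal{L}^k$, $\Phi^k$, $y^{k,*}$, $\widehat L_1=L_1(1+B)$, $\widehat\ell_1=\ell_1(1+B)^2$ as in the context. Let $y^{i,*}:\mathcal{B}(\widehat x^k,\delta_k)\to\mathcal{Y}$ be any map and put $g_k=\nabla_x\mathcal{L}^k(\widehat x^k,y^{i,*}(\widehat x^k))$. Assume $g_k\neq0$, $\nabla\Phi^k(\widehat x^k)\neq 0$, and that for some $\tilde\kappa_{dcp}>0$, $$\Phi^k(\widehat x^k)-\Phi^k(\widehat x^k+\tilde s^k)\ge\tilde\kappa_{dcp}\|\nabla\Phi^k(\widehat x^k)\|\min\{\delta_k,1\},\qquad \tilde s^k=-\delta_k\frac{\nabla\Phi^k(\widehat x^k)}{\|\nabla\Phi^k(\widehat x^k)\|}.$$ Suppose further that $\|y^{i,*}(x)-y^{k,*}(x)\|\le\epsilon$ for all $x\in\mathcal{B}(\widehat x^k,\delta_k)$, where $$\epsilon\le\min\Big\{\frac{\|g_k\|}{2\widehat\ell_1},\ \frac{\|\nabla\Phi^k(\widehat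 x^k)\|\,\|g_k\|\,\tilde\kappa_{dcp}}{8\widehat L_1\widehat\ell_1\max\{\delta_{\max},1\}},\ \frac{\|g_k\|\min\{\delta_k,1\}\tilde\kappa_{dcp}}{16\widehat L_1}\Big\}.$$ Then, with $s^k=-\delta_k g_k/\|g_k\|$ and $\kappa_{dcp}=\tilde\kappa_{dcp}/8$, $$\mathcal{L}^k(\widehat x^k,y^{i,*}(\widehat x^k))-\mathcal{L}^k(\widehat x^k+s^k,y^{i,*}(\widehat x^k+s^k))\ge\kappa_{dcp}\|g_k\|\min\{\delta_k,1\}.$$
   Context: Notation: $\mathcal{B}(x,\delta)=\{z:\|z-x\|\le\delta\}$. Given data points $x^1,\dots,x^{N_k}$ and observations $\omega^1,\dots,\omega^{N_k}\in\mathbb{R}^d$, affine coefficients $\widehat B^{k,1}\in\mathbb{R}^{n\times d}$, $\widehat B^{k,0}\in\mathbb{R}^{1\times d}$ (the least-squares fit of $\omega^i$ on $x^i$) and residuals $e^{k,i}=\omega^i-(\widehat B^{k,1})^\top x^i-(\widehat B^{k,0})^\top$, the local model is $m_k(x,e)=(\widehat B^{k,1})^\top x+(\widehat B^{k,0})^\top+e$, and $\mathcal{L}^k(x,y)=\frac1{N_k}\sum_{i=1}^{N_k}l(x,y,m_k(x,e^{k,i}))$, $\Phi^k(x)=\max_{y\in\mathcal{Y}}\mathcal{L}^k(x,y)$, $y^{k,*}(x)=\arg\max_{y\in\mathcal{Y}}\mathcal{L}^k(x,y)$ (unique by strong concavity). $\ell$-smooth means differentiable with $\ell$-Lipschitz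 gradient. *)

theory Defs
  imports "HOL-Analysis.Analysis"
begin

definition grad :: "('a::euclidean_space \<Rightarrow> real) \<Rightarrow> 'a \<Rightarrow> 'a" where
  "grad f x = (THE D. GDERIV f x :> D)"

definition smooth_with :: "real \<Rightarrow> ('a::euclidean_space \<Rightarrow> real) \<Rightarrow> bool" where
  "smooth_with ell f \<longleftrightarrow>
     (\<forall>x. f differentiable (at x)) \<and> (\<forall>x y. norm (grad f x - grad f y) \<le> ell * dist x y)"

definition strongly_concave_on :: "real \<Rightarrow> 'a::real_normed_vector set \<Rightarrow> ('a \<Rightarrow> real) \<Rightarrow> bool" where
  "strongly_concave_on mu Y f \<longleftrightarrow>
     (\<forall>y1\<in>Y. \<forall>y2\<in>Y. \<forall>t::real. 0 \<le> t \<and> t \<le> 1 \<longrightarrow>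
        f (t *\<^sub>R y1 + (1 - t) *\<^sub>R y2) \<ge> t * f y1 + (1 - t) * f y2 + mu / 2 * t * (1 - t) * (norm (y1 - y2))\<^sup>2)"

definition frob_norm :: "real^'d^'n \<Rightarrow> real" where
  "frob_norm A = sqrt (\<Sum>i\<in>UNIV. \<Sum>j\<in>UNIV. (A $ i $ j)\<^sup>2)"

definition ls_obj :: "nat \<Rightarrow> (nat \<Rightarrow> real^'n) \<Rightarrow> (nat \<Rightarrow> real^'d) \<Rightarrow> real^'d^'n \<Rightarrow> real^'d \<Rightarrow> real" where
  "ls_obj N xs om B1 B0 = (\<Sum>i<N. (norm (om i - transpose B1 *v xs i - B0))\<^sup>2)"

text \<open>Residuals e^{k,i}; B0 (a 1 x d row) is represented by the vector (B0)^T in R^d.\<close>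
definition resid :: "(nat \<Rightarrow> real^'n) \<Rightarrow> (nat \<Rightarrow> real^'d) \<Rightarrow> real^'d^'n \<Rightarrow> real^'d \<Rightarrow> nat \<Rightarrow> real^'d" where
  "resid xs om B1 B0 i = om i - transpose B1 *v xs i - B0"

definition mk :: "real^'d^'n \<Rightarrow> real^'d \<Rightarrow> real^'n \<Rightarrow> real^'d \<Rightarrow> real^'d" where
  "mk B1 B0 x e = transpose B1 *v x + B0 + e"

definition Lk :: "((real^'n) \<times> (real^'m) \<times> (real^'d) \<Rightarrow> real) \<Rightarrow> nat \<Rightarrow> (nat \<Rightarrow> real^'n) \<Rightarrow> (nat \<Rightarrow> real^'d)
    \<Rightarrow> real^'d^'n \<Rightarrow> real^'d \<Rightarrow> real^'n \<Rightarrow> real^'m \<Rightarrow> real" where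
  "Lk l N xs om B1 B0 x y = (1 / real N) * (\<Sum>i<N. l (x, y, mk B1 B0 x (resid xs om B1 B0 i)))"

definition Phik :: "((real^'n) \<times> (real^'m) \<times> (real^'d) \<Rightarrow> real) \<Rightarrow> nat \<Rightarrow> (nat \<Rightarrow> real^'n) \<Rightarrow> (nat \<Rightarrow> real^'d)
    \<Rightarrow> real^'d^'n \<Rightarrow> real^'d \<Rightarrow> (real^'m) set \<Rightarrow> real^'n \<Rightarrow> real" where
  "Phik l N xs om B1 B0 Y x = (SUP y\<in>Y. Lk l N xs om B1 B0 x y)"

definition ystar :: "((real^'n) \<times> (real^'m) \<times> (real^'d) \<Rightarrow> real) \<Rightarrow> nat \<Rightarrow> (nat \<Rightarrow> real^'n) \<Rightarrow> (nat \<Rightarrow> real^'d)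
    \<Rightarrow> real^'d^'n \<Rightarrow> real^'d \<Rightarrow> (real^'m) set \<Rightarrow> real^'n \<Rightarrow> real^'m" where
  "ystar l N xs om B1 B0 Y x =
     (THE y. y \<in> Y \<and> (\<forall>y'\<in>Y. Lk l N xs om B1 B0 x y' \<le> Lk l N xs om B1 B0 x y))"

end

theory Submission
  imports Defs
begin

(*
  Strong concavity makes the inner maximiser y*(x) unique, and comparing the optimality of
  y*(x) and y*(x + h) shows that it moves by O(sqrt |h|); with the Lipschitz dependence of the
  x-gradient on y this gives Danskin's formula grad Phi(x) = grad_x L(x, y*(x)). An
  eps-accurate maximiser therefore perturbs the gradient by at most ellhat * eps, so the
  normalized steps along g_k and along grad Phi differ by O(delta * ellhat * eps / |g_k|).
  As Phi is Lhat-Lipschitz and L(x, y) <= Phi(x) on Y, the assumed decrease of Phi along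
  grad Phi transfers to a decrease of L along g_k, losing a factor 8.
*)

lemma grad_eqI:
  fixes f :: "'a::euclidean_space \<Rightarrow> real"
  assumes "GDERIV f x :> D"
  shows "grad f x = D"
  unfolding grad_def
proof (rule the_equality)
  show "GDERIV f x :> D" by (fact assms)
next
  fix D' assume "GDERIV f x :> D'"
  then have "(\<lambda>h. inner h D') = (\<lambda>h. inner h D)"
    using assms has_derivative_unique unfolding gderiv_def by blast
  then have "inner (D' - D) D' = inner (D' - D) D" by metis
  then have "inner (D' - D) (D' - D) = 0" by (simp add: inner_diff_right)
  then show "D' = D" by simp
qed

lemma has_gradient_grad:
  fixes f :: "'a::euclidean_space \<Rightarrow> real"
  assumes "f differentiable (at x)"
  shows "GDERIV f x :> grad f x"
proof -
  obtain f' where f': "(f has_derivative f') (at x)"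
    using assms differentiable_def by blast
  have "f' = (\<lambda>h. inner h (adjoint f' 1))"
    using adjoint_works[OF has_derivative_linear[OF f'], of _ 1] by (simp add: fun_eq_iff)
  then have "GDERIV f x :> adjoint f' 1"
    using f' unfolding gderiv_def by simp
  then show ?thesis by (simp add: grad_eqI)
qed

lemma gderivI_remainder:
  fixes f :: "'a::euclidean_space \<Rightarrow> real"
  assumes bound: "\<And>h. \<bar>f (x + h) - f x - inner h G\<bar> \<le> norm h * r h"
    and r: "(r \<longlongrightarrow> 0) (at 0)"
  shows "GDERIV f x :> G"
  unfolding gderiv_def has_derivative_at
proof (intro conjI)
  show "bounded_linear (\<lambda>h. inner h G)" by (rule bounded_linear_inner_left)
  show "((\<lambda>h. norm (f (x + h) - f x - inner h G) / norm h) \<longlongrightarrow> 0) (at 0)"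
  proof (rule Lim_null_comparison)
    show "\<forall>\<^sub>F h in at 0. norm (norm (f (x + h) - f x - inner h G) / norm h) \<le> \<bar>r h\<bar>"
    proof (rule always_eventually, rule allI)
      fix h :: 'a
      show "norm (norm (f (x + h) - f x - inner h G) / norm h) \<le> \<bar>r h\<bar>"
      proof (cases "h = 0")
        case False
        have "\<bar>f (x + h) - f x - inner h G\<bar> \<le> norm h * \<bar>r h\<bar>"
          using bound[of h] mult_left_mono[OF abs_ge_self[of "r h"] norm_ge_zero[of h]] by linarith
        then show ?thesis using False by (simp add: divide_le_eq mult.commute)
      qed simp
    qed
    show "((\<lambda>h. \<bar>r h\<bar>) \<longlongrightarrow> 0) (at 0)" using tendsto_rabs_zero[OF r] .
  qed
qed

lemma smooth_with_nonneg:
  fixes f :: "'a::euclidean_space \<Rightarrow> real"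
  assumes "smooth_with ell f"
  shows "0 \<le> ell"
proof -
  obtain b :: 'a where b: "b \<in> Basis" using nonempty_Basis by blast
  have "0 \<le> ell * dist b 0"
    using assms unfolding smooth_with_def by (meson norm_ge_zero order_trans)
  moreover have "dist b 0 = 1" using b by simp
  ultimately show ?thesis by simp
qed

lemma smooth_with_taylor_bound:
  fixes f :: "'a::euclidean_space \<Rightarrow> real"
  assumes smooth: "smooth_with ell f"
  shows "\<bar>f q - f p - inner (q - p) (grad f p)\<bar> \<le> ell * (norm (q - p))\<^sup>2"
proof -
  have deriv: "(f has_derivative (\<lambda>h. inner h (grad f x))) (at x within closed_segment p q)" for x
    using has_gradient_grad smooth has_derivative_at_withinI
    unfolding smooth_with_def gderiv_def by blast
  have onorm_le: "onorm ((\<lambda>h. inner h (grad f x)) - (\<lambda>h. inner h (grad f p))) \<le> ell * norm (q - p)"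
    if x: "x \<in> closed_segment p q" for x
  proof -
    have "(\<lambda>h. inner h (grad f x)) - (\<lambda>h. inner h (grad f p)) = (\<lambda>h. inner h (grad f x - grad f p))"
      by (rule ext) (simp add: inner_diff_right)
    then have "onorm ((\<lambda>h. inner h (grad f x)) - (\<lambda>h. inner h (grad f p)))
        = onorm (\<lambda>h. inner h (grad f x - grad f p))"
      by simp
    also have "\<dots> \<le> norm (grad f x - grad f p)"
      by (rule onorm_bound) (auto simp: Cauchy_Schwarz_ineq2 mult.commute)
    also have "\<dots> \<le> ell * dist x p"
      using smooth unfolding smooth_with_def by blast
    also have "\<dots> \<le> ell * norm (q - p)"
      using dist_in_closed_segment[OF x] smooth_with_nonneg[OF smooth]
      by (intro mult_left_mono) (simp_all add: dist_norm norm_minus_commute)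
    finally show ?thesis .
  qed
  have "norm (f q - f p - inner (q - p) (grad f p)) \<le> norm (q - p) * (ell * norm (q - p))"
  proof (rule differentiable_bound_linearization[OF _ deriv onorm_le])
    show "p + t *\<^sub>R (q - p) \<in> closed_segment p q" if "t \<in> {0..1}" for t
    proof -
      have "p + t *\<^sub>R (q - p) = (1 - t) *\<^sub>R p + t *\<^sub>R q" by (simp add: algebra_simps)
      then show ?thesis using that unfolding in_segment(1) by auto
    qed
  qed simp_all
  then show ?thesis by (simp add: power2_eq_square mult_ac)
qed

lemma norm_sgn_diff_le:
  fixes a b :: "'a::real_normed_vector"
  assumes "b \<noteq> 0"
  shows "norm (sgn a - sgn b) \<le> 2 * norm (a - b) / norm b"
proof (cases "a = 0")
  case True
  then show ?thesis using assms by (simp add: norm_sgn)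
next
  case False
  have nb: "norm b > 0" using assms by simp
  have "sgn a - sgn b = (inverse (norm a) - inverse (norm b)) *\<^sub>R a + inverse (norm b) *\<^sub>R (a - b)"
    by (simp add: sgn_div_norm algebra_simps)
  then have "norm (sgn a - sgn b)
      \<le> \<bar>inverse (norm a) - inverse (norm b)\<bar> * norm a + inverse (norm b) * norm (a - b)"
    by (metis norm_triangle_ineq norm_scaleR abs_inverse abs_norm_cancel)
  also have "\<bar>inverse (norm a) - inverse (norm b)\<bar> * norm a = \<bar>norm b - norm a\<bar> / norm b"
    using False nb by (simp add: field_simps abs_div)
  also have "\<dots> \<le> norm (a - b) / norm b"
    using nb norm_triangle_ineq3[of b a] by (simp add: divide_right_mono norm_minus_commute)
  finally show ?thesis by (simp add: divide_inverse mult_ac)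
qed

lemma mean_abs_le:
  fixes a :: "nat \<Rightarrow> real"
  assumes "N > 0" and "\<And>i. i < N \<Longrightarrow> \<bar>a i\<bar> \<le> c"
  shows "\<bar>(1 / real N) * (\<Sum>i<N. a i)\<bar> \<le> c"
proof -
  have "\<bar>\<Sum>i<N. a i\<bar> \<le> (\<Sum>i<N. \<bar>a i\<bar>)" by (rule sum_abs)
  also have "\<dots> \<le> of_nat (card {..<N}) * c" by (rule sum_bounded_above) (use assms(2) in auto)
  finally have "\<bar>\<Sum>i<N. a i\<bar> \<le> real N * c" by simp
  then show ?thesis using assms(1) by (simp add: abs_mult field_simps)
qed

lemma mean_norm_le:
  fixes a :: "nat \<Rightarrow> 'a::real_normed_vector"
  assumes "N > 0" and "\<And>i. i < N \<Longrightarrow> norm (a i) \<le> c"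
  shows "norm ((1 / real N) *\<^sub>R (\<Sum>i<N. a i)) \<le> c"
proof -
  have "norm (\<Sum>i<N. a i) \<le> (\<Sum>i<N. norm (a i))" by (rule norm_sum)
  also have "\<dots> \<le> of_nat (card {..<N}) * c" by (rule sum_bounded_above) (use assms(2) in auto)
  finally have "norm (\<Sum>i<N. a i) \<le> real N * c" by simp
  then show ?thesis using assms(1) by (simp add: field_simps)
qed

lemma strongly_concave_on_mean:
  assumes "N > 0" and "\<And>i. i < N \<Longrightarrow> strongly_concave_on mu Y (f i)"
  shows "strongly_concave_on mu Y (\<lambda>y. (1 / real N) * (\<Sum>i<N. f i y))"
  unfolding strongly_concave_on_def
proof (intro ballI allI impI)
  fix y1 y2 and t :: real assume "y1 \<in> Y" "y2 \<in> Y" and t: "0 \<le> t \<and> t \<le> 1"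
  define q where "q = mu / 2 * t * (1 - t) * (norm (y1 - y2))\<^sup>2"
  have "(\<Sum>i<N. t * f i y1 + (1 - t) * f i y2 + q) \<le> (\<Sum>i<N. f i (t *\<^sub>R y1 + (1 - t) *\<^sub>R y2))"
    using assms(2) \<open>y1 \<in> Y\<close> \<open>y2 \<in> Y\<close> t unfolding strongly_concave_on_def q_def
    by (intro sum_mono) blast
  then have "t * (\<Sum>i<N. f i y1) + (1 - t) * (\<Sum>i<N. f i y2) + real N * q
      \<le> (\<Sum>i<N. f i (t *\<^sub>R y1 + (1 - t) *\<^sub>R y2))"
    by (simp add: sum.distrib sum_distrib_left)
  then have "(t * (\<Sum>i<N. f i y1) + (1 - t) * (\<Sum>i<N. f i y2) + real N * q) / real N
      \<le> (\<Sum>i<N. f i (t *\<^sub>R y1 + (1 - t) *\<^sub>R y2)) / real N"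
    by (rule divide_right_mono) simp
  then show "t * ((1 / real N) * (\<Sum>i<N. f i y1)) + (1 - t) * ((1 / real N) * (\<Sum>i<N. f i y2))
      + mu / 2 * t * (1 - t) * (norm (y1 - y2))\<^sup>2 \<le> (1 / real N) * (\<Sum>i<N. f i (t *\<^sub>R y1 + (1 - t) *\<^sub>R y2))"
    using assms(1) unfolding q_def[symmetric] by (simp add: add_divide_distrib)
qed

lemma frob_norm_nonneg: "0 \<le> frob_norm A"
  unfolding frob_norm_def by (intro real_sqrt_ge_zero sum_nonneg) simp

lemma frob_norm_transpose: "frob_norm (transpose A) = frob_norm (A :: real^'d^'n)"
proof -
  have "(\<Sum>i\<in>UNIV. \<Sum>j\<in>UNIV. (transpose A $ i $ j)\<^sup>2) = (\<Sum>i\<in>UNIV. \<Sum>j\<in>UNIV. (A $ j $ i)\<^sup>2)"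
    by (simp add: transpose_def)
  also have "\<dots> = (\<Sum>j\<in>UNIV. \<Sum>i\<in>UNIV. (A $ j $ i)\<^sup>2)"
    by (rule sum.swap)
  finally show ?thesis unfolding frob_norm_def by simp
qed

lemma norm_mult_vec_le_frob_norm:
  fixes A :: "real^'d^'n"
  shows "norm (A *v v) \<le> frob_norm A * norm v"
proof -
  have "(norm (A *v v))\<^sup>2 = (\<Sum>i\<in>UNIV. (inner (A $ i) v)\<^sup>2)"
    unfolding power2_norm_eq_inner inner_vec_def
    by (simp add: matrix_vector_mult_def inner_vec_def power2_eq_square mult.commute)
  also have "\<dots> \<le> (\<Sum>i\<in>UNIV. (norm (A $ i))\<^sup>2 * (norm v)\<^sup>2)"
  proof (rule sum_mono)
    fix i
    have "\<bar>inner (A $ i) v\<bar>\<^sup>2 \<le> (norm (A $ i) * norm v)\<^sup>2"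
      by (rule power_mono[OF Cauchy_Schwarz_ineq2]) simp
    then show "(inner (A $ i) v)\<^sup>2 \<le> (norm (A $ i))\<^sup>2 * (norm v)\<^sup>2"
      by (simp add: power_mult_distrib)
  qed
  also have "\<dots> = (frob_norm A * norm v)\<^sup>2"
  proof -
    have "(norm (A $ i))\<^sup>2 = (\<Sum>j\<in>UNIV. (A $ i $ j)\<^sup>2)" for i
      unfolding power2_norm_eq_inner inner_vec_def by (simp add: power2_eq_square)
    moreover have "(frob_norm A)\<^sup>2 = (\<Sum>i\<in>UNIV. \<Sum>j\<in>UNIV. (A $ i $ j)\<^sup>2)"
      unfolding frob_norm_def by (auto intro!: sum_nonneg)
    ultimately show ?thesis by (simp add: sum_distrib_right power_mult_distrib)
  qed
  finally show ?thesis
    using frob_norm_nonneg by (meson norm_ge_zero mult_nonneg_nonneg power2_le_imp_le)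
qed

lemma norm_mult_vec_le:
  fixes A :: "real^'d^'n"
  assumes "frob_norm A \<le> B"
  shows "norm (A *v v) \<le> B * norm v"
  using norm_mult_vec_le_frob_norm[of A v] mult_right_mono[OF assms norm_ge_zero[of v]] by linarith

definition model_grad :: "((real^'n) \<times> (real^'m) \<times> (real^'d) \<Rightarrow> real) \<Rightarrow> real^'d^'n \<Rightarrow> real^'d
    \<Rightarrow> real^'d \<Rightarrow> real^'n \<Rightarrow> real^'m \<Rightarrow> real^'n" where
  "model_grad l B1 B0 e x y = (let p = grad l (x, y, mk B1 B0 x e) in fst p + B1 *v snd (snd p))"

definition Lk_grad :: "((real^'n) \<times> (real^'m) \<times> (real^'d) \<Rightarrow> real) \<Rightarrow> nat \<Rightarrow> (nat \<Rightarrow> real^'n)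
    \<Rightarrow> (nat \<Rightarrow> real^'d) \<Rightarrow> real^'d^'n \<Rightarrow> real^'d \<Rightarrow> real^'n \<Rightarrow> real^'m \<Rightarrow> real^'n" where
  "Lk_grad l N xs om B1 B0 x y =
     (1 / real N) *\<^sub>R (\<Sum>i<N. model_grad l B1 B0 (resid xs om B1 B0 i) x y)"

lemma mk_diff: "mk B1 B0 x e - mk B1 B0 x' e = transpose B1 *v (x - x')"
  by (simp add: mk_def matrix_vector_mult_diff_distrib)

lemma model_taylor_bound:
  assumes smooth: "smooth_with ell l" and B1: "frob_norm B1 \<le> B"
  shows "\<bar>l (x + h, y, mk B1 B0 (x + h) e) - l (x, y, mk B1 B0 x e) - inner h (model_grad l B1 B0 e x y)\<bar>
    \<le> ell * (1 + B)\<^sup>2 * (norm h)\<^sup>2"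
proof -
  define p where "p = (x, y, mk B1 B0 x e)"
  define q where "q = (x + h, y, mk B1 B0 (x + h) e)"
  have B: "0 \<le> B" using frob_norm_nonneg[of B1] B1 by linarith
  have qp: "q - p = (h, 0, transpose B1 *v h)"
    unfolding p_def q_def using mk_diff[of B1 B0 "x + h" e x] by simp
  have inner_eq: "inner (q - p) (grad l p) = inner h (model_grad l B1 B0 e x y)"
    unfolding qp model_grad_def p_def[symmetric] Let_def
    by (cases "grad l p") (simp add: inner_add_right dot_lmul_matrix)
  have "(norm (q - p))\<^sup>2 = (norm h)\<^sup>2 + (norm (transpose B1 *v h))\<^sup>2"
    unfolding qp by (simp add: norm_Pair)
  also have "\<dots> \<le> (norm h)\<^sup>2 + (B * norm h)\<^sup>2"
    using norm_mult_vec_le[of "transpose B1" B h] B1 by (simp add: frob_norm_transpose power_mono)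
  also have "\<dots> \<le> (1 + B)\<^sup>2 * (norm h)\<^sup>2"
    using B by (simp add: power2_eq_square algebra_simps)
  finally have "ell * (norm (q - p))\<^sup>2 \<le> ell * ((1 + B)\<^sup>2 * (norm h)\<^sup>2)"
    using smooth_with_nonneg[OF smooth] by (rule mult_left_mono)
  then show ?thesis
    using smooth_with_taylor_bound[OF smooth, of q p] unfolding inner_eq
    by (simp add: p_def q_def mult_ac)
qed

lemma model_grad_lipschitz:
  assumes smooth: "smooth_with ell l" and B1: "frob_norm B1 \<le> B"
  shows "norm (model_grad l B1 B0 e x y1 - model_grad l B1 B0 e x y2) \<le> ell * (1 + B) * norm (y1 - y2)"
proof -
  define z where "z = grad l (x, y1, mk B1 B0 x e) - grad l (x, y2, mk B1 B0 x e)"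
  have B: "0 \<le> B" using frob_norm_nonneg[of B1] B1 by linarith
  have "model_grad l B1 B0 e x y1 - model_grad l B1 B0 e x y2 = fst z + B1 *v snd (snd z)"
    unfolding z_def model_grad_def Let_def by (simp add: matrix_vector_mult_diff_distrib)
  also have "norm \<dots> \<le> norm (fst z) + B * norm (snd (snd z))"
    using norm_triangle_ineq[of "fst z" "B1 *v snd (snd z)"] norm_mult_vec_le[OF B1, of "snd (snd z)"] by linarith
  also have "\<dots> \<le> (1 + B) * norm z"
  proof -
    have "norm (fst z) \<le> norm z"
      using norm_fst_le[of "fst z" "snd z"] by simp
    moreover have "norm (snd (snd z)) \<le> norm z"
      using norm_snd_le[of "snd (snd z)" "fst (snd z)"] norm_snd_le[of "snd z" "fst z"] by simp
    ultimately show ?thesis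
      using B by (simp add: distrib_right add_mono mult_left_mono)
  qed
  also have "\<dots> \<le> (1 + B) * (ell * norm (y1 - y2))"
  proof -
    have "norm z \<le> ell * dist (x, y1, mk B1 B0 x e) (x, y2, mk B1 B0 x e)"
      using smooth unfolding smooth_with_def z_def by blast
    also have "dist (x, y1, mk B1 B0 x e) (x, y2, mk B1 B0 x e) = norm (y1 - y2)"
      by (simp add: dist_norm norm_Pair)
    finally show ?thesis using B by (simp add: mult_left_mono)
  qed
  finally show ?thesis by (simp add: mult_ac)
qed

lemma model_lipschitz:
  assumes lip: "L1-lipschitz_on UNIV l" and B1: "frob_norm B1 \<le> B"
  shows "\<bar>l (x, y, mk B1 B0 x e) - l (x', y', mk B1 B0 x' e)\<bar>
    \<le> L1 * (1 + B) * (norm (x - x') + norm (y - y'))"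
proof -
  have B: "0 \<le> B" using frob_norm_nonneg[of B1] B1 by linarith
  have "norm ((x, y, mk B1 B0 x e) - (x', y', mk B1 B0 x' e))
      \<le> norm (x - x') + (norm (y - y') + norm (transpose B1 *v (x - x')))"
    using mk_diff[of B1 B0 x e x'] norm_Pair_le
    by (simp add: order_trans[OF norm_Pair_le] add_left_mono)
  also have "\<dots> \<le> (1 + B) * (norm (x - x') + norm (y - y'))"
    using norm_mult_vec_le[of "transpose B1" B "x - x'"] B1 mult_nonneg_nonneg[OF B norm_ge_zero[of "y - y'"]]
    by (simp add: frob_norm_transpose algebra_simps)
  finally have "L1 * norm ((x, y, mk B1 B0 x e) - (x', y', mk B1 B0 x' e))
      \<le> L1 * ((1 + B) * (norm (x - x') + norm (y - y')))"
    using lipschitz_on_nonneg[OF lip] by (rule mult_left_mono)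
  then show ?thesis
    using lipschitz_on_normD[OF lip, of "(x, y, mk B1 B0 x e)" "(x', y', mk B1 B0 x' e)"]
    by (simp add: mult_ac)
qed

lemma Lk_taylor_bound:
  assumes "N > 0" and "smooth_with ell l" and "frob_norm B1 \<le> B"
  shows "\<bar>Lk l N xs om B1 B0 (x + h) y - Lk l N xs om B1 B0 x y - inner h (Lk_grad l N xs om B1 B0 x y)\<bar>
    \<le> ell * (1 + B)\<^sup>2 * (norm h)\<^sup>2"
proof -
  let ?e = "resid xs om B1 B0"
  have "Lk l N xs om B1 B0 (x + h) y - Lk l N xs om B1 B0 x y - inner h (Lk_grad l N xs om B1 B0 x y)
      = (1 / real N) * (\<Sum>i<N. l (x + h, y, mk B1 B0 (x + h) (?e i)) - l (x, y, mk B1 B0 x (?e i))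
          - inner h (model_grad l B1 B0 (?e i) x y))"
    unfolding Lk_def Lk_grad_def by (simp add: inner_sum_right sum_subtractf right_diff_distrib)
  also have "\<bar>\<dots>\<bar> \<le> ell * (1 + B)\<^sup>2 * (norm h)\<^sup>2"
    using assms by (intro mean_abs_le model_taylor_bound)
  finally show ?thesis .
qed

lemma Lk_grad_lipschitz:
  assumes "N > 0" and "smooth_with ell l" and "frob_norm B1 \<le> B"
  shows "norm (Lk_grad l N xs om B1 B0 x y1 - Lk_grad l N xs om B1 B0 x y2) \<le> ell * (1 + B) * norm (y1 - y2)"
proof -
  let ?e = "resid xs om B1 B0"
  have "Lk_grad l N xs om B1 B0 x y1 - Lk_grad l N xs om B1 B0 x y2
      = (1 / real N) *\<^sub>R (\<Sum>i<N. model_grad l B1 B0 (?e i) x y1 - model_grad l B1 B0 (?e i) x y2)"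
    unfolding Lk_grad_def by (simp add: sum_subtractf scaleR_diff_right)
  also have "norm \<dots> \<le> ell * (1 + B) * norm (y1 - y2)"
    using assms by (intro mean_norm_le model_grad_lipschitz)
  finally show ?thesis .
qed

lemma Lk_lipschitz:
  assumes "N > 0" and "L1-lipschitz_on UNIV l" and "frob_norm B1 \<le> B"
  shows "\<bar>Lk l N xs om B1 B0 x y - Lk l N xs om B1 B0 x' y'\<bar> \<le> L1 * (1 + B) * (norm (x - x') + norm (y - y'))"
proof -
  let ?e = "resid xs om B1 B0"
  have "Lk l N xs om B1 B0 x y - Lk l N xs om B1 B0 x' y'
      = (1 / real N) * (\<Sum>i<N. l (x, y, mk B1 B0 x (?e i)) - l (x', y', mk B1 B0 x' (?e i)))"
    unfolding Lk_def by (simp add: sum_subtractf right_diff_distrib)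
  also have "\<bar>\<dots>\<bar> \<le> L1 * (1 + B) * (norm (x - x') + norm (y - y'))"
    using assms by (intro mean_abs_le model_lipschitz)
  finally show ?thesis .
qed

lemma Lk_strongly_concave:
  assumes "N > 0" and "\<And>x z. strongly_concave_on mu Y (\<lambda>y. l (x, y, z))"
  shows "strongly_concave_on mu Y (Lk l N xs om B1 B0 x)"
proof -
  have "Lk l N xs om B1 B0 x = (\<lambda>y. (1 / real N) * (\<Sum>i<N. l (x, y, mk B1 B0 x (resid xs om B1 B0 i))))"
    by (simp add: fun_eq_iff Lk_def)
  then show ?thesis
    using assms by (simp only:) (rule strongly_concave_on_mean)
qed

lemma add_minus_scaleR_div_norm: "x + (- (d / norm w)) *\<^sub>R w = x - d *\<^sub>R sgn w"
  by (simp add: sgn_div_norm divide_inverse)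

lemma mult_le_mult_min_1:
  fixes delta delta_max E P :: real
  assumes "0 < delta" "delta \<le> delta_max" and "0 \<le> P" and "E * max delta_max 1 \<le> P"
  shows "delta * E \<le> P * min delta 1"
proof -
  have M: "0 < max delta_max 1" by simp
  have "delta \<le> min delta 1 * max delta_max 1"
    using assms(1,2) by (cases "delta \<le> 1") (simp_all add: min_def max_def)
  then have "delta * P \<le> P * min delta 1 * max delta_max 1"
    using assms(3) by (simp add: mult_left_mono mult.commute mult.left_commute)
  moreover have "delta * E * max delta_max 1 \<le> delta * P"
    using assms(1,4) by (simp add: mult.assoc)
  ultimately have "delta * E * max delta_max 1 \<le> P * min delta 1 * max delta_max 1"
    by linarith
  then show ?thesis
    using M by (rule mult_right_le_imp_le)
qed

locale strongly_concave_max =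
  fixes L :: "'a::euclidean_space \<Rightarrow> 'b::real_normed_vector \<Rightarrow> real"
    and G :: "'a \<Rightarrow> 'b \<Rightarrow> 'a"
    and Y :: "'b set"
    and mu c K :: real
  assumes compact_Y: "compact Y" and Y_ne: "Y \<noteq> {}" and convex_Y: "convex Y"
    and mu_pos: "0 < mu" and c_nonneg: "0 \<le> c" and K_nonneg: "0 \<le> K"
    and strongly_concave: "\<And>x. strongly_concave_on mu Y (L x)"
    and taylor_bound: "\<And>x h y. \<bar>L (x + h) y - L x y - inner h (G x y)\<bar> \<le> c * (norm h)\<^sup>2"
    and G_lipschitz: "\<And>x y y'. norm (G x y - G x y') \<le> c * norm (y - y')"
    and L_lipschitz: "\<And>x y x' y'. \<bar>L x y - L x' y'\<bar> \<le> K * (norm (x - x') + norm (y - y'))"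
begin

definition Phi :: "'a \<Rightarrow> real" where
  "Phi x = (SUP y\<in>Y. L x y)"

definition maximiser :: "'a \<Rightarrow> 'b" where
  "maximiser x = (THE y. y \<in> Y \<and> (\<forall>y'\<in>Y. L x y' \<le> L x y))"

lemma quadratic_growth:
  assumes "y \<in> Y" "z \<in> Y" and max: "\<forall>y'\<in>Y. L x y' \<le> L x z"
  shows "mu / 4 * (norm (y - z))\<^sup>2 \<le> L x z - L x y"
proof -
  have "(1/2) *\<^sub>R y + (1 - 1/2) *\<^sub>R z \<in> Y"
    using convexD[OF convex_Y assms(1,2), of "1/2" "1 - 1/2"] by simp
  then have "L x ((1/2) *\<^sub>R y + (1 - 1/2) *\<^sub>R z) \<le> L x z"
    using max by blast
  moreover have "(1/2) * L x y + (1 - 1/2) * L x z + mu / 2 * (1/2) * (1 - 1/2) * (norm (y - z))\<^sup>2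
      \<le> L x ((1/2) *\<^sub>R y + (1 - 1/2) *\<^sub>R z)"
    using strongly_concave[of x, unfolded strongly_concave_on_def, rule_format, OF assms(1,2), of "1/2"]
    by simp
  ultimately show ?thesis by simp
qed

lemma ex1_maximiser: "\<exists>!y. y \<in> Y \<and> (\<forall>y'\<in>Y. L x y' \<le> L x y)"
proof -
  have "K-lipschitz_on Y (L x)"
    using L_lipschitz[of x _ x] K_nonneg by (intro lipschitz_onI) (simp_all add: dist_norm)
  then obtain z where z: "z \<in> Y" "\<forall>y\<in>Y. L x y \<le> L x z"
    using continuous_attains_sup[OF compact_Y Y_ne lipschitz_on_continuous_on] by blast
  have "w = z" if "w \<in> Y" "\<forall>y\<in>Y. L x y \<le> L x w" for w
  proof -
    have "mu / 4 * (norm (w - z))\<^sup>2 \<le> 0"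
      using quadratic_growth[of w z x] z that by fastforce
    then show ?thesis using mu_pos by (simp add: mult_le_0_iff)
  qed
  with z show ?thesis by blast
qed

lemma maximiser_in: "maximiser x \<in> Y"
  and maximiser_max: "y \<in> Y \<Longrightarrow> L x y \<le> L x (maximiser x)"
  using theI'[OF ex1_maximiser[of x]] unfolding maximiser_def[symmetric] by auto

lemma Phi_eq: "Phi x = L x (maximiser x)"
  unfolding Phi_def by (rule cSup_eq_maximum) (auto intro: maximiser_in maximiser_max)

lemma L_le_Phi: "y \<in> Y \<Longrightarrow> L x y \<le> Phi x"
  by (simp add: Phi_eq maximiser_max)

lemma Phi_le_L_approx:
  assumes "norm (y - maximiser x) \<le> eps"
  shows "Phi x - K * eps \<le> L x y"
proof -
  have "\<bar>L x y - L x (maximiser x)\<bar> \<le> K * norm (y - maximiser x)"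
    using L_lipschitz[of x y x "maximiser x"] by simp
  then show ?thesis
    using mult_left_mono[OF assms K_nonneg] unfolding Phi_eq by linarith
qed

lemma Phi_lipschitz: "\<bar>Phi x - Phi x'\<bar> \<le> K * norm (x - x')"
proof -
  have "Phi x - Phi x' \<le> K * norm (x - x')" for x x'
    using L_lipschitz[of x "maximiser x" x' "maximiser x"] L_le_Phi[OF maximiser_in, of x' x]
    by (simp add: Phi_eq)
  from this[of x x'] this[of x' x] show ?thesis
    by (simp add: norm_minus_commute)
qed

lemma norm_maximiser_diff_le: "norm (maximiser (x + h) - maximiser x) \<le> sqrt (8 * K * norm h / mu)"
proof -
  define y0 where "y0 = maximiser x"
  define yh where "yh = maximiser (x + h)"
  have "mu / 4 * (norm (yh - y0))\<^sup>2 \<le> L x y0 - L x yh"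
    unfolding y0_def yh_def by (intro quadratic_growth maximiser_in ballI maximiser_max)
  moreover have "L (x + h) y0 \<le> L (x + h) yh"
    unfolding y0_def yh_def by (intro maximiser_in maximiser_max)
  moreover have "\<bar>L x y0 - L (x + h) y0\<bar> \<le> K * norm h" "\<bar>L x yh - L (x + h) yh\<bar> \<le> K * norm h"
    using L_lipschitz[of x y0 "x + h" y0] L_lipschitz[of x yh "x + h" yh] by simp_all
  ultimately have "mu / 4 * (norm (yh - y0))\<^sup>2 \<le> 2 * K * norm h"
    by (simp add: abs_le_iff)
  then have "(norm (yh - y0))\<^sup>2 \<le> 8 * K * norm h / mu"
    using mu_pos by (simp add: field_simps)
  then show ?thesis
    unfolding y0_def yh_def by (metis real_sqrt_le_mono real_sqrt_abs abs_norm_cancel)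
qed

lemma has_gradient_L: "GDERIV (\<lambda>x. L x y) x :> G x y"
proof (rule gderivI_remainder[where r = "\<lambda>h. c * norm h"])
  show "\<bar>L (x + h) y - L x y - inner h (G x y)\<bar> \<le> norm h * (c * norm h)" for h
    using taylor_bound[of x h y] by (simp add: power2_eq_square mult_ac)
  show "((\<lambda>h. c * norm h) \<longlongrightarrow> 0) (at 0)"
    by (rule tendsto_mult_right_zero[OF tendsto_norm_zero[OF tendsto_ident_at]])
qed

lemma has_gradient_Phi: "GDERIV Phi x :> G x (maximiser x)"
proof (rule gderivI_remainder[where r = "\<lambda>h. c * norm h + c * sqrt (8 * K * norm h / mu)"])
  fix h
  define y0 where "y0 = maximiser x"
  define yh where "yh = maximiser (x + h)"
  have taylor: "\<bar>L (x + h) y - L x y - inner h (G x y)\<bar> \<le> c * (norm h)\<^sup>2" for y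
    by (rule taylor_bound)
  have "Phi (x + h) - Phi x \<le> L (x + h) yh - L x yh"
    using maximiser_max[OF maximiser_in, of x "x + h"] unfolding Phi_eq y0_def yh_def by simp
  moreover have "inner h (G x yh - G x y0) \<le> norm h * (c * sqrt (8 * K * norm h / mu))"
  proof -
    have "inner h (G x yh - G x y0) \<le> norm h * norm (G x yh - G x y0)"
      by (rule norm_cauchy_schwarz)
    also have "\<dots> \<le> norm h * (c * norm (yh - y0))"
      by (intro mult_left_mono G_lipschitz norm_ge_zero)
    also have "\<dots> \<le> norm h * (c * sqrt (8 * K * norm h / mu))"
      unfolding y0_def yh_def
      by (intro mult_left_mono norm_maximiser_diff_le c_nonneg norm_ge_zero)
    finally show ?thesis .
  qed
  moreover have "L (x + h) y0 \<le> Phi (x + h)"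
    unfolding y0_def by (intro L_le_Phi maximiser_in)
  moreover have "0 \<le> norm h * (c * sqrt (8 * K * norm h / mu))"
    using c_nonneg K_nonneg mu_pos by simp
  ultimately show "\<bar>Phi (x + h) - Phi x - inner h (G x (maximiser x))\<bar>
      \<le> norm h * (c * norm h + c * sqrt (8 * K * norm h / mu))"
    using taylor[of yh] taylor[of y0] unfolding Phi_eq[of x] y0_def[symmetric]
    by (simp add: abs_le_iff inner_diff_right power2_eq_square algebra_simps)
next
  have "((\<lambda>h. c * norm h + c * sqrt (8 * K * norm h / mu)) \<longlongrightarrow> c * 0 + c * sqrt (8 * K * 0 / mu)) (at 0)"
    using mu_pos by (intro tendsto_intros tendsto_norm_zero[OF tendsto_ident_at]) simp
  then show "((\<lambda>h. c * norm h + c * sqrt (8 * K * norm h / mu)) \<longlongrightarrow> 0) (at 0)"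
    by simp
qed

lemma Phi_sgn_step_le:
  assumes "b \<noteq> 0"
  shows "Phi (x - d *\<^sub>R sgn b) \<le> Phi (x - d *\<^sub>R sgn a) + 2 * K * \<bar>d\<bar> * norm (a - b) / norm b"
proof -
  have "Phi (x - d *\<^sub>R sgn b) \<le> Phi (x - d *\<^sub>R sgn a) + K * norm (d *\<^sub>R (sgn a - sgn b))"
    using Phi_lipschitz[of "x - d *\<^sub>R sgn b" "x - d *\<^sub>R sgn a"]
    by (simp add: abs_le_iff scaleR_diff_right)
  also have "K * norm (d *\<^sub>R (sgn a - sgn b)) \<le> K * (\<bar>d\<bar> * (2 * norm (a - b) / norm b))"
    using norm_sgn_diff_le[OF assms, of a] K_nonneg
    by (intro mult_left_mono) (simp_all add: mult_left_mono del: times_divide_eq_right)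
  finally show ?thesis by (simp add: mult_ac)
qed

lemma descent_with_approximate_maximiser:
  fixes x0 :: 'a and y0 y1 :: 'b and delta delta_max kt eps :: real
  defines "g \<equiv> G x0 y0" and "v \<equiv> G x0 (maximiser x0)"
  assumes delta: "0 < delta" "delta \<le> delta_max"
    and y0: "norm (y0 - maximiser x0) \<le> eps" and y1: "y1 \<in> Y"
    and g_ne: "g \<noteq> 0" and kt: "0 < kt"
    and dcp: "kt * norm v * min delta 1 \<le> Phi x0 - Phi (x0 - delta *\<^sub>R sgn v)"
    and eps1: "eps * (2 * c) \<le> norm g"
    and eps2: "eps * (8 * K * c * max delta_max 1) \<le> norm v * norm g * kt"
    and eps3: "eps * (16 * K) \<le> norm g * min delta 1 * kt"
  shows "kt / 8 * norm g * min delta 1 \<le> L x0 y0 - L (x0 - delta *\<^sub>R sgn g) y1"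
proof -
  define m where "m = min delta 1"
  define a where "a = kt * norm g * m"
  define E where "E = 8 * K * c * eps / norm g"
  have ng: "0 < norm g" using g_ne by simp
  have m: "0 < m" using delta unfolding m_def by simp
  have a: "0 \<le> a" unfolding a_def using kt m by simp
  have gv: "norm (v - g) \<le> c * eps"
  proof -
    have "norm (v - g) \<le> c * norm (maximiser x0 - y0)"
      unfolding v_def g_def by (rule G_lipschitz)
    also have "\<dots> \<le> c * eps"
      using y0 c_nonneg by (simp add: norm_minus_commute mult_left_mono)
    finally show ?thesis .
  qed
  have "a / 2 \<le> kt * norm v * m"
  proof -
    have "norm g / 2 \<le> norm v"
      using norm_triangle_sub[of g v] gv eps1 by (simp add: norm_minus_commute algebra_simps)
    then show ?thesis
      unfolding a_def using kt m by (simp add: mult_right_mono)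
  qed
  moreover have "Phi (x0 - delta *\<^sub>R sgn g) \<le> Phi (x0 - delta *\<^sub>R sgn v) + delta * E / 4"
  proof -
    have "Phi (x0 - delta *\<^sub>R sgn g) \<le> Phi (x0 - delta *\<^sub>R sgn v) + 2 * K * delta * norm (v - g) / norm g"
      using Phi_sgn_step_le[OF g_ne, of x0 delta v] delta by simp
    moreover have "2 * K * delta * norm (v - g) / norm g \<le> 2 * K * delta * (c * eps) / norm g"
      using gv K_nonneg delta by (intro divide_right_mono mult_left_mono) simp_all
    moreover have "2 * K * delta * (c * eps) / norm g = delta * E / 4"
      unfolding E_def using ng by (simp add: field_simps)
    ultimately show ?thesis by linarith
  qed
  moreover have "delta * E \<le> kt * norm v * m"
  proof -
    have "E * max delta_max 1 \<le> kt * norm v"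
      using eps2 ng unfolding E_def by (simp add: field_simps)
    then show ?thesis
      unfolding m_def using kt by (intro mult_le_mult_min_1[OF delta]) simp_all
  qed
  moreover have "K * eps \<le> a / 16"
    using eps3 unfolding a_def m_def by (simp add: mult_ac)
  moreover have "L (x0 - delta *\<^sub>R sgn g) y1 \<le> Phi (x0 - delta *\<^sub>R sgn g)"
    by (rule L_le_Phi[OF y1])
  moreover have "Phi x0 - K * eps \<le> L x0 y0"
    by (rule Phi_le_L_approx[OF y0])
  moreover have "kt / 8 * norm g * min delta 1 = a / 8"
    unfolding a_def m_def by simp
  ultimately show ?thesis
    using dcp[folded m_def] a by linarith
qed

end

lemma Lk_strongly_concave_max:
  assumes smooth: "smooth_with ell l" and lip: "L1-lipschitz_on UNIV l"
    and Y: "compact Y" "Y \<noteq> {}" "convex Y" and mu: "0 < mu"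
    and sconc: "\<And>x z. strongly_concave_on mu Y (\<lambda>y. l (x, y, z))"
    and N: "N > 0" and B1: "frob_norm B1 \<le> B"
  shows "strongly_concave_max (Lk l N xs om B1 B0) (Lk_grad l N xs om B1 B0) Y mu
    (ell * (1 + B)\<^sup>2) (L1 * (1 + B))"
proof
  have B: "0 \<le> B" using frob_norm_nonneg[of B1] B1 by linarith
  show "0 \<le> ell * (1 + B)\<^sup>2" using smooth_with_nonneg[OF smooth] by simp
  show "0 \<le> L1 * (1 + B)" using lipschitz_on_nonneg[OF lip] B by simp
  show "strongly_concave_on mu Y (Lk l N xs om B1 B0 x)" for x
    using N sconc by (rule Lk_strongly_concave)
  show "\<bar>Lk l N xs om B1 B0 (x + h) y - Lk l N xs om B1 B0 x y - inner h (Lk_grad l N xs om B1 B0 x y)\<bar>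
      \<le> ell * (1 + B)\<^sup>2 * (norm h)\<^sup>2" for x h y
    using N smooth B1 by (rule Lk_taylor_bound)
  show "norm (Lk_grad l N xs om B1 B0 x y - Lk_grad l N xs om B1 B0 x y') \<le> ell * (1 + B)\<^sup>2 * norm (y - y')"
    for x y y'
  proof -
    have "1 + B \<le> (1 + B)\<^sup>2"
      using B mult_nonneg_nonneg[OF B B] by (simp add: power2_eq_square algebra_simps)
    then have "ell * (1 + B) * norm (y - y') \<le> ell * (1 + B)\<^sup>2 * norm (y - y')"
      using smooth_with_nonneg[OF smooth] by (intro mult_right_mono mult_left_mono) simp_all
    then show ?thesis
      using Lk_grad_lipschitz[OF N smooth B1, of xs om B0 x y y'] by linarith
  qed
  show "\<bar>Lk l N xs om B1 B0 x y - Lk l N xs om B1 B0 x' y'\<bar> \<le> L1 * (1 + B) * (norm (x - x') + norm (y - y'))"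
    for x y x' y'
    using N lip B1 by (rule Lk_lipschitz)
qed (use Y mu in auto)

theorem lemma2:
  fixes l :: "(real^'n) \<times> (real^'m) \<times> (real^'d) \<Rightarrow> real"
    and ell1 L1 mu B delta_k delta_max kt eps :: real
    and Y :: "(real^'m) set"
    and N :: nat and xs :: "nat \<Rightarrow> real^'n" and om :: "nat \<Rightarrow> real^'d"
    and B1 :: "real^'d^'n" and B0 :: "real^'d"
    and xhat :: "real^'n" and yi :: "real^'n \<Rightarrow> real^'m"
  defines "L \<equiv> Lk l N xs om B1 B0"
    and "Phi \<equiv> Phik l N xs om B1 B0 Y"
    and "ys \<equiv> ystar l N xs om B1 B0 Y"
    and "Lhat \<equiv> L1 * (1 + B)"
    and "ellhat \<equiv> ell1 * (1 + B)\<^sup>2"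
    and "g \<equiv> grad (\<lambda>x. Lk l N xs om B1 B0 x (yi xhat)) xhat"
  assumes smooth: "smooth_with ell1 l"
    and lip: "L1-lipschitz_on UNIV l"
    and Y_ne: "Y \<noteq> {}" and Y_closed: "closed Y" and Y_convex: "convex Y" and Y_bounded: "bounded Y"
    and mu_pos: "mu > 0"
    and sconc: "\<And>x z. strongly_concave_on mu Y (\<lambda>y. l (x, y, z))"
    and N_pos: "N > 0"
    and lsq: "\<And>C1 C0. ls_obj N xs om B1 B0 \<le> ls_obj N xs om C1 C0"
    and delta: "0 < delta_k" "delta_k \<le> delta_max"
    and B1_bound: "frob_norm B1 \<le> B"
    and yi_maps: "\<And>x. x \<in> cball xhat delta_k \<Longrightarrow> yi x \<in> Y"
    and g_ne: "g \<noteq> 0"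
    and gPhi_ne: "grad Phi xhat \<noteq> 0"
    and kt_pos: "kt > 0"
    and dcp: "Phi xhat - Phi (xhat + (- (delta_k / norm (grad Phi xhat)) *\<^sub>R grad Phi xhat))
              \<ge> kt * norm (grad Phi xhat) * min delta_k 1"
    and yi_close: "\<And>x. x \<in> cball xhat delta_k \<Longrightarrow> norm (yi x - ys x) \<le> eps"
    and eps1: "eps * (2 * ellhat) \<le> norm g"
    and eps2: "eps * (8 * Lhat * ellhat * max delta_max 1) \<le> norm (grad Phi xhat) * norm g * kt"
    and eps3: "eps * (16 * Lhat) \<le> norm g * min delta_k 1 * kt"
  shows "L xhat (yi xhat) - L (xhat + (- (delta_k / norm g)) *\<^sub>R g)
            (yi (xhat + (- (delta_k / norm g)) *\<^sub>R g))
         \<ge> (kt / 8) * norm g * min delta_k 1"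
proof -
  interpret M: strongly_concave_max L "Lk_grad l N xs om B1 B0" Y mu ellhat Lhat
    unfolding L_def ellhat_def Lhat_def
    using smooth lip Y_ne Y_convex mu_pos sconc N_pos B1_bound Y_closed Y_bounded
    by (intro Lk_strongly_concave_max) (simp_all add: compact_eq_bounded_closed)
  have Phi: "Phi = M.Phi"
    using M.Phi_def unfolding Phi_def Phik_def L_def by (simp add: fun_eq_iff)
  have ys: "ys = M.maximiser"
    using M.maximiser_def unfolding ys_def ystar_def L_def by (simp add: fun_eq_iff)
  have g: "g = Lk_grad l N xs om B1 B0 xhat (yi xhat)"
    unfolding g_def L_def[symmetric] by (rule grad_eqI[OF M.has_gradient_L])
  have v: "grad M.Phi xhat = Lk_grad l N xs om B1 B0 xhat (M.maximiser xhat)"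
    by (rule grad_eqI[OF M.has_gradient_Phi])
  have close: "norm (yi xhat - M.maximiser xhat) \<le> eps"
    using yi_close[of xhat] delta(1) unfolding ys by simp
  have step_in: "yi (xhat - delta_k *\<^sub>R sgn g) \<in> Y"
    using yi_maps delta(1) by (simp add: dist_norm norm_sgn)
  show ?thesis
    using M.descent_with_approximate_maximiser[OF delta close step_in[unfolded g]
        g_ne[unfolded g] kt_pos
        dcp[unfolded add_minus_scaleR_div_norm Phi v] eps1[unfolded g] eps2[unfolded Phi v g] eps3[unfolded g]]
    unfolding g add_minus_scaleR_div_norm by simp
qed

end
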